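(* Let $L$ be a regular language over a nonempty finite alphabet $A$, and let $\mathcal{A}_L$ be the minimal automaton of $L$. Then the following four conditions are equivalent: (1) $\mathcal{A}_L$ is a zero automaton; (2) $L$ is a language with zero, i.e. the syntactic monoid of $L$ has a zero element; (3) $L$ obeys the zero-one law, i.e. $\mu(L)=\lim_{n\to\infty}\mu_n(L)$ exists and $\mu(L)\in\{0,1\}$; (4) $L$ is recognised by a quasi-zero automaton.
   Context: All automata are complete, deterministic, finite and accessible: $\mathcal{A}=\langle Q,A,\cdot,q_0,F\rangle$ with transition function $\cdot:Q\times A\to Q$ extended to words, and $L(\mathcal{A})=\{w\in A^*: q_0\cdot w\in F\}$. For a language $L\subseteq A^*$, $\mu_n(L)=|L\cap A^n|/|A|^n$ and $\mu(L)=\lim_{n\to\infty}\mu_n(L)$ when the limit exists; $L$ obeys the zero-one law (is a zero-one language) if $L$ is regular, $\mu(L)$ exists and $\mu(L)\in\{0,1\}$. The syntactic monoid of $L$ is $A^*/\sim_L$ where $u\sim_L v$ iff for all $x,y\in A^*$, $xuy\in L\Leftrightarrow xvy\in L$. An element $0$ of a monoid $M$ is a zero if $0m=m0=0$ for all $m\in M$. A state $q$ is a sink state if $q\cdot a=q$ for all $a\in A$. A word $w$ is synchronising for $\mathcal{A}$ if there is a state $q$ with $p\cdot w=q$ for all $p\in Q$; $\mathcal{A}$ is synchronising if it has a synchronising word. A zero automaton is a synchronising automaton having a sink state. A strongly connected sink component of $\mathcal{A}$ is a nonempty set $P\subseteq Q$ such that every state of $P$ is reachable (by some word) from every other state of $P$,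 and no state outside $P$ is reachable from a state of $P$; $\mathrm{Sink}(\mathcal{A})$ denotes the family of all strongly connected sink components. $\mathcal{A}$ is quasi-zero if either $\bigcup\mathrm{Sink}(\mathcal{A})\subseteq F$ or $\bigcup\mathrm{Sink}(\mathcal{A})\cap F=\emptyset$. *)

theory Defs
  imports Complex_Main "HOL-Algebra.Group"
begin

definition dfa :: "'s set \<Rightarrow> ('s \<Rightarrow> 'a \<Rightarrow> 's) \<Rightarrow> 's \<Rightarrow> 's set \<Rightarrow> bool" where
  "dfa Q delta q0 F \<longleftrightarrow> finite Q \<and> q0 \<in> Q \<and> F \<subseteq> Q \<and>
     (\<forall>q\<in>Q. \<forall>a. delta q a \<in> Q) \<and> (\<forall>q\<in>Q. \<exists>w. foldl delta q0 w = q)"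

definition lang :: "('s \<Rightarrow> 'a \<Rightarrow> 's) \<Rightarrow> 's \<Rightarrow> 's set \<Rightarrow> 'a list set" where
  "lang delta q0 F = {w. foldl delta q0 w \<in> F}"

definition regular :: "'a list set \<Rightarrow> bool" where
  "regular L \<longleftrightarrow> (\<exists>(Q::nat set) delta q0 F. dfa Q delta q0 F \<and> lang delta q0 F = L)"

definition reach :: "('s \<Rightarrow> 'a \<Rightarrow> 's) \<Rightarrow> 's \<Rightarrow> 's \<Rightarrow> bool" where
  "reach delta p q \<longleftrightarrow> (\<exists>w. foldl delta p w = q)"

definition sink_state :: "'s set \<Rightarrow> ('s \<Rightarrow> 'a \<Rightarrow> 's) \<Rightarrow> 's \<Rightarrow> bool" where
  "sink_state Q delta q \<longleftrightarrow> q \<in> Q \<and> (\<forall>a. delta q a = q)"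

definition synchronising :: "'s set \<Rightarrow> ('s \<Rightarrow> 'a \<Rightarrow> 's) \<Rightarrow> bool" where
  "synchronising Q delta \<longleftrightarrow> (\<exists>w q. \<forall>p\<in>Q. foldl delta p w = q)"

definition zero_automaton :: "'s set \<Rightarrow> ('s \<Rightarrow> 'a \<Rightarrow> 's) \<Rightarrow> bool" where
  "zero_automaton Q delta \<longleftrightarrow> synchronising Q delta \<and> (\<exists>q. sink_state Q delta q)"

definition sink_component :: "'s set \<Rightarrow> ('s \<Rightarrow> 'a \<Rightarrow> 's) \<Rightarrow> 's set \<Rightarrow> bool" where
  "sink_component Q delta P \<longleftrightarrow> P \<noteq> {} \<and> P \<subseteq> Q \<and>
     (\<forall>p\<in>P. \<forall>q\<in>P. reach delta p q) \<and> (\<forall>p\<in>P. \<forall>q. reach delta p q \<longrightarrow> q \<in> P)"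

definition Sink :: "'s set \<Rightarrow> ('s \<Rightarrow> 'a \<Rightarrow> 's) \<Rightarrow> 's set set" where
  "Sink Q delta = {P. sink_component Q delta P}"

definition quasi_zero :: "'s set \<Rightarrow> ('s \<Rightarrow> 'a \<Rightarrow> 's) \<Rightarrow> 's set \<Rightarrow> bool" where
  "quasi_zero Q delta F \<longleftrightarrow> \<Union>(Sink Q delta) \<subseteq> F \<or> \<Union>(Sink Q delta) \<inter> F = {}"

text \<open>Minimal automaton of L (states = left quotients u^{-1} L).\<close>

definition lquot :: "'a list set \<Rightarrow> 'a list \<Rightarrow> 'a list set" where
  "lquot L u = {v. u @ v \<in> L}"

definition min_states :: "'a list set \<Rightarrow> 'a list set set" where
  "min_states L = range (lquot L)"

definition min_delta :: "'a list set \<Rightarrow> 'a \<Rightarrow> 'a list set" where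
  "min_delta X a = {v. a # v \<in> X}"

definition min_final :: "'a list set \<Rightarrow> 'a list set set" where
  "min_final L = {X \<in> min_states L. [] \<in> X}"

definition synt_rel :: "'a list set \<Rightarrow> ('a list \<times> 'a list) set" where
  "synt_rel L = {(u, v). \<forall>x y. x @ u @ y \<in> L \<longleftrightarrow> x @ v @ y \<in> L}"

definition synt_monoid :: "'a list set \<Rightarrow> 'a list set monoid" where
  "synt_monoid L = \<lparr> carrier = UNIV // synt_rel L,
     mult = (\<lambda>X Y. synt_rel L `` {(SOME u. u \<in> X) @ (SOME v. v \<in> Y)}),
     one = synt_rel L `` {[]} \<rparr>"

definition is_zero :: "('b, 'c) monoid_scheme \<Rightarrow> 'b \<Rightarrow> bool" where
  "is_zero M z \<longleftrightarrow> z \<in> carrier M \<and> (\<forall>m\<in>carrier M. z \<otimes>\<^bsub>M\<^esub> m = z \<and> m \<otimes>\<^bsub>M\<^esub> z = z)"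

definition language_with_zero :: "'a list set \<Rightarrow> bool" where
  "language_with_zero L \<longleftrightarrow> (\<exists>z. is_zero (synt_monoid L) z)"

definition mu_n :: "('a::finite) list set \<Rightarrow> nat \<Rightarrow> real" where
  "mu_n L n = real (card {w \<in> L. length w = n}) / real (card (UNIV::'a set)) ^ n"

definition zero_one :: "('a::finite) list set \<Rightarrow> bool" where
  "zero_one L \<longleftrightarrow> regular L \<and> (\<exists>l. (mu_n L \<longlonglongrightarrow> l) \<and> (l = 0 \<or> l = 1))"

end

(*
  All four conditions are equivalent to L having a zero word w, i.e. x w y \<in> L \<longleftrightarrow> w \<in> L for
  all x, y; equivalently, the syntactic class of w is a zero of the syntactic monoid.

  In the minimal automaton a zero word sends every state to the quotient UNIV or {}, which is a
  sink state; conversely a word synchronising the minimal automaton onto a sink state is a zero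
  word. A zero word, prefixed by a letter to make it nonempty, occurs as a factor of almost every
  word, so the density of L tends to 1 or 0. If the density of the words leading from q0 into a
  set G tends to 0, no state of a sink component lies in G: the automaton can return to such a
  state from anywhere in its component within a bounded number of letters, which would give the
  words reaching it positive density (apply this to F or to its complement). Finally, in a
  quasi-zero automaton every word driving all states into the sink components is a zero word.
*)

theory Submission
  imports Defs "HOL-Library.Sublist" "HOL-Library.Cardinality"
begin

section \<open>Zero words and the syntactic monoid\<close>

definition zero_word :: "'a list set \<Rightarrow> 'a list \<Rightarrow> bool" where
  "zero_word L w \<longleftrightarrow> (\<forall>x y. x @ w @ y \<in> L \<longleftrightarrow> w \<in> L)"

lemma synt_rel_iff: "(u, v) \<in> synt_rel L \<longleftrightarrow> (\<forall>x y. x @ u @ y \<in> L \<longleftrightarrow> x @ v @ y \<in> L)"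
  by (simp add: synt_rel_def)

lemma equiv_synt_rel: "equiv UNIV (synt_rel L)"
  by (rule equivI) (auto simp: synt_rel_iff refl_on_def sym_def trans_def)

lemma synt_rel_append:
  assumes "(u, u') \<in> synt_rel L" and "(v, v') \<in> synt_rel L"
  shows "(u @ v, u' @ v') \<in> synt_rel L"
  unfolding synt_rel_iff
proof (intro allI)
  fix x y
  have "x @ (u @ v) @ y \<in> L \<longleftrightarrow> x @ u' @ (v @ y) \<in> L"
    using assms(1)[unfolded synt_rel_iff, rule_format, of x "v @ y"] by simp
  also have "\<dots> \<longleftrightarrow> (x @ u') @ v' @ y \<in> L"
    using assms(2)[unfolded synt_rel_iff, rule_format, of "x @ u'" y] by simp
  finally show "x @ (u @ v) @ y \<in> L \<longleftrightarrow> x @ (u' @ v') @ y \<in> L" by simp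
qed

lemma synt_monoid_mult_class:
  "synt_rel L `` {u} \<otimes>\<^bsub>synt_monoid L\<^esub> synt_rel L `` {v} = synt_rel L `` {u @ v}"
proof -
  have rep: "(x, SOME x'. x' \<in> synt_rel L `` {x}) \<in> synt_rel L" for x
    using someI[of "\<lambda>x'. x' \<in> synt_rel L `` {x}" x] equiv_synt_rel[of L]
    by (simp add: equiv_def refl_on_def)
  have "synt_rel L `` {u} \<otimes>\<^bsub>synt_monoid L\<^esub> synt_rel L `` {v} =
      synt_rel L `` {(SOME u'. u' \<in> synt_rel L `` {u}) @ (SOME v'. v' \<in> synt_rel L `` {v})}"
    unfolding synt_monoid_def by (simp only: monoid.simps)
  also have "\<dots> = synt_rel L `` {u @ v}"
  proof (rule sym, rule equiv_class_eq[OF equiv_synt_rel])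
    show "(u @ v, (SOME u'. u' \<in> synt_rel L `` {u}) @ (SOME v'. v' \<in> synt_rel L `` {v})) \<in> synt_rel L"
      using rep[of u] rep[of v] by (rule synt_rel_append)
  qed
  finally show ?thesis .
qed

lemma zero_word_iff_synt_rel:
  "zero_word L w \<longleftrightarrow> (\<forall>u. (w @ u, w) \<in> synt_rel L \<and> (u @ w, w) \<in> synt_rel L)"
proof
  assume zw: "zero_word L w"
  have "x @ (w @ u) @ y \<in> L \<longleftrightarrow> x @ w @ y \<in> L" and "x @ (u @ w) @ y \<in> L \<longleftrightarrow> x @ w @ y \<in> L"
    for u x y
    using zw[unfolded zero_word_def, rule_format, of x "u @ y"]
      zw[unfolded zero_word_def, rule_format, of "x @ u" y]
      zw[unfolded zero_word_def, rule_format, of x y]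
    by simp_all
  then show "\<forall>u. (w @ u, w) \<in> synt_rel L \<and> (u @ w, w) \<in> synt_rel L"
    unfolding synt_rel_iff by blast
next
  assume absorb: "\<forall>u. (w @ u, w) \<in> synt_rel L \<and> (u @ w, w) \<in> synt_rel L"
  have "x @ w @ y \<in> L \<longleftrightarrow> w \<in> L" for x y
  proof -
    have "(w @ y, w) \<in> synt_rel L" and "(x @ w, w) \<in> synt_rel L"
      using absorb by blast+
    then have "x @ (w @ y) @ [] \<in> L \<longleftrightarrow> x @ w @ [] \<in> L"
      and "[] @ (x @ w) @ [] \<in> L \<longleftrightarrow> [] @ w @ [] \<in> L"
      unfolding synt_rel_iff by blast+
    then show ?thesis by simp
  qed
  then show "zero_word L w"
    unfolding zero_word_def by blast
qed

lemma language_with_zero_iff_zero_word: "language_with_zero L \<longleftrightarrow> (\<exists>w. zero_word L w)"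
proof -
  have carrier: "carrier (synt_monoid L) = UNIV // synt_rel L"
    by (simp add: synt_monoid_def)
  have zero_class: "is_zero (synt_monoid L) (synt_rel L `` {w}) \<longleftrightarrow> zero_word L w" for w
  proof -
    have "is_zero (synt_monoid L) (synt_rel L `` {w}) \<longleftrightarrow>
        (\<forall>u. synt_rel L `` {w @ u} = synt_rel L `` {w} \<and> synt_rel L `` {u @ w} = synt_rel L `` {w})"
      unfolding is_zero_def carrier by (simp add: quotient_def synt_monoid_mult_class) blast
    also have "\<dots> \<longleftrightarrow> zero_word L w"
      unfolding zero_word_iff_synt_rel by (simp add: eq_equiv_class_iff[OF equiv_synt_rel])
    finally show ?thesis .
  qed
  show ?thesis
  proof
    assume "language_with_zero L"
    then obtain z where z: "is_zero (synt_monoid L) z"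
      unfolding language_with_zero_def by blast
    then have "z \<in> UNIV // synt_rel L"
      unfolding is_zero_def carrier by blast
    then obtain w where "z = synt_rel L `` {w}"
      by (rule quotientE)
    then show "\<exists>w. zero_word L w"
      using z zero_class by blast
  next
    assume "\<exists>w. zero_word L w"
    then show "language_with_zero L"
      unfolding language_with_zero_def using zero_class by blast
  qed
qed

section \<open>Density\<close>

lemma finite_words_length: "finite {xs :: 'a::finite list. length xs = n}"
  using finite_lists_length_eq[of "UNIV :: 'a set" n] by simp

lemma card_words_length: "card {xs :: 'a::finite list. length xs = n} = CARD('a) ^ n"
  using card_lists_length_eq[of "UNIV :: 'a set" n] by simp

lemma finite_words_length_in: "finite {xs :: 'a::finite list. P xs \<and> length xs = n}"
  by (rule finite_subset[OF _ finite_words_length[of n]]) auto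

lemma mu_n_nonneg: "0 \<le> mu_n L n"
  by (simp add: mu_n_def)

lemma mu_n_mono:
  assumes "L \<subseteq> M"
  shows "mu_n L n \<le> mu_n M n"
  unfolding mu_n_def
  by (intro divide_right_mono of_nat_mono card_mono[OF finite_words_length_in[of "\<lambda>w. w \<in> M" n]])
    (use assms in auto)

lemma mu_n_Compl:
  fixes L :: "'a::finite list set"
  shows "mu_n (- L) n = 1 - mu_n L n"
proof -
  let ?A = "{w \<in> - L. length w = n}" and ?B = "{w \<in> L. length w = n}"
  have finite: "finite ?A" "finite ?B"
    by (rule finite_words_length_in)+
  have disjoint: "?A \<inter> ?B = {}" and union: "?A \<union> ?B = {w. length w = n}"
    by auto
  have "card ?A + card ?B = card (?A \<union> ?B)"
    using card_Un_disjoint[OF finite disjoint] by (rule sym)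
  also have "\<dots> = CARD('a) ^ n"
    unfolding union by (rule card_words_length)
  finally have "real (card ?A) + real (card ?B) = real CARD('a) ^ n"
    by (simp flip: of_nat_add of_nat_power)
  moreover have "real CARD('a) ^ n > 0"
    by simp
  ultimately show ?thesis
    unfolding mu_n_def by (simp add: field_simps)
qed

lemma mu_n_tendsto_0_subset:
  assumes "L \<subseteq> M" and "mu_n M \<longlonglongrightarrow> 0"
  shows "mu_n L \<longlonglongrightarrow> 0"
  by (rule tendsto_sandwich[OF always_eventually always_eventually tendsto_const assms(2)])
    (use mu_n_nonneg mu_n_mono[OF assms(1)] in auto)

lemma card_words_avoiding_le:
  fixes w :: "'a::finite list"
  assumes "length w = k"
  shows "card {v. length v = m * k + r \<and> \<not> sublist w v}
    \<le> (CARD('a) ^ k - 1) ^ m * CARD('a) ^ r"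
proof (induction m)
  case 0
  have "card {v :: 'a list. length v = r \<and> \<not> sublist w v} \<le> card {v :: 'a list. length v = r}"
    by (rule card_mono[OF finite_words_length]) auto
  then show ?case by (simp add: card_words_length)
next
  case (Suc m)
  let ?G = "{a :: 'a list. a \<noteq> w \<and> length a = k}"
  let ?N = "{v. length v = m * k + r \<and> \<not> sublist w v}"
  have "{v. length v = Suc m * k + r \<and> \<not> sublist w v} \<subseteq> (\<lambda>(a, v). a @ v) ` (?G \<times> ?N)"
  proof
    fix v assume v: "v \<in> {v. length v = Suc m * k + r \<and> \<not> sublist w v}"
    have "take k v \<noteq> w"
      using v sublist_append_rightI[of "take k v" "drop k v"] by auto
    moreover have "\<not> sublist w (drop k v)"
      using v sublist_append_leftI[of "drop k v" "take k v"] sublist_order.order_trans by auto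
    ultimately show "v \<in> (\<lambda>(a, v). a @ v) ` (?G \<times> ?N)"
      using v by (intro image_eqI[of _ _ "(take k v, drop k v)"]) auto
  qed
  moreover have fin: "finite (?G \<times> ?N)"
    using finite_words_length_in[of "\<lambda>a. a \<noteq> w" k] finite_words_length_in[of "\<lambda>v. \<not> sublist w v"]
    by (simp add: conj_commute)
  ultimately have "card {v. length v = Suc m * k + r \<and> \<not> sublist w v}
      \<le> card ((\<lambda>(a, v). a @ v) ` (?G \<times> ?N))"
    by (intro card_mono finite_imageI)
  also have "\<dots> \<le> card (?G \<times> ?N)"
    using fin by (rule card_image_le)
  also have "\<dots> = card ?G * card ?N"
    by (rule card_cartesian_product)
  also have "card ?G = CARD('a) ^ k - 1"
  proof -
    have "?G = {a. length a = k} - {w}" using assms by auto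
    then show ?thesis using assms by (simp add: card_Diff_singleton finite_words_length card_words_length)
  qed
  also have "(CARD('a) ^ k - 1) * card ?N
      \<le> (CARD('a) ^ k - 1) * ((CARD('a) ^ k - 1) ^ m * CARD('a) ^ r)"
    using Suc.IH by (rule mult_le_mono2)
  finally show ?case
    by (simp add: mult.assoc)
qed

lemma mu_n_avoiding_le:
  fixes w :: "'a::finite list"
  assumes "w \<noteq> []"
  shows "mu_n {v. \<not> sublist w v} n \<le> (1 - 1 / real CARD('a) ^ length w) ^ (n div length w)"
proof -
  define k where "k = length w"
  define C where "C = real CARD('a)"
  define m where "m = n div k"
  have n: "n = m * k + n mod k" unfolding m_def by simp
  have C: "C ^ k \<ge> 1" and C_pos: "C > 0" unfolding C_def by (simp_all add: Suc_leI one_le_power)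
  have "card {v. \<not> sublist w v \<and> length v = n} \<le> (CARD('a) ^ k - 1) ^ m * CARD('a) ^ (n mod k)"
    using card_words_avoiding_le[of w k m "n mod k"] n unfolding k_def by (simp add: conj_commute)
  then have "real (card {v. \<not> sublist w v \<and> length v = n})
      \<le> real ((CARD('a) ^ k - 1) ^ m * CARD('a) ^ (n mod k))"
    by (simp only: of_nat_le_iff)
  also have "\<dots> = (C ^ k - 1) ^ m * C ^ (n mod k)"
    using C unfolding C_def by (simp add: of_nat_diff)
  finally have "mu_n {v. \<not> sublist w v} n \<le> (C ^ k - 1) ^ m * C ^ (n mod k) / C ^ n"
    unfolding mu_n_def C_def by (intro divide_right_mono) auto
  also have "C ^ n = (C ^ k) ^ m * C ^ (n mod k)"
    by (subst n) (simp add: power_add power_mult mult.commute)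
  also have "(C ^ k - 1) ^ m * C ^ (n mod k) / ((C ^ k) ^ m * C ^ (n mod k))
      = ((C ^ k - 1) / C ^ k) ^ m"
    using C_pos by (simp add: power_divide)
  also have "(C ^ k - 1) / C ^ k = 1 - 1 / C ^ k"
    using C_pos by (simp add: diff_divide_distrib)
  finally show ?thesis unfolding C_def k_def m_def .
qed

lemma mu_n_avoiding_tendsto_0:
  fixes w :: "'a::finite list"
  assumes "w \<noteq> []"
  shows "mu_n {v. \<not> sublist w v} \<longlonglongrightarrow> 0"
proof (rule tendsto_sandwich[OF always_eventually always_eventually tendsto_const])
  have "real CARD('a) ^ length w \<ge> 1" by (simp add: Suc_leI one_le_power)
  then have "\<bar>1 - 1 / real CARD('a) ^ length w\<bar> < 1" by (simp add: field_simps)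
  then show "(\<lambda>n. (1 - 1 / real CARD('a) ^ length w) ^ (n div length w)) \<longlonglongrightarrow> 0"
    using assms by (intro filterlim_compose[OF LIMSEQ_power_zero filterlim_at_top_div_const_nat]) auto
qed (use mu_n_nonneg mu_n_avoiding_le[OF assms] in auto)

lemma mu_n_zero_word:
  assumes "zero_word L w"
  shows "mu_n L \<longlonglongrightarrow> (if w \<in> L then 1 else 0)"
proof -
  obtain a :: 'a where True by blast \<comment> \<open>w may be empty, a # w is not\<close>
  have avoid: "mu_n {v. \<not> sublist (a # w) v} \<longlonglongrightarrow> 0"
    by (rule mu_n_avoiding_tendsto_0) simp
  have factor: "v \<in> L \<longleftrightarrow> w \<in> L" if sub: "sublist (a # w) v" for v
  proof -
    obtain x y where "v = x @ (a # w) @ y" using sub unfolding sublist_def by blast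
    then have "v = (x @ [a]) @ w @ y" by simp
    then show ?thesis using assms unfolding zero_word_def by blast
  qed
  show ?thesis
  proof (cases "w \<in> L")
    case True
    then have "- L \<subseteq> {v. \<not> sublist (a # w) v}"
      using factor by blast
    then have "mu_n (- L) \<longlonglongrightarrow> 0"
      by (rule mu_n_tendsto_0_subset[OF _ avoid])
    then have "(\<lambda>n. 1 - mu_n (- L) n) \<longlonglongrightarrow> 1 - 0" by (intro tendsto_intros)
    then show ?thesis using True by (simp add: mu_n_Compl)
  next
    case False
    then have "L \<subseteq> {v. \<not> sublist (a # w) v}"
      using factor by blast
    then show ?thesis
      using False mu_n_tendsto_0_subset[OF _ avoid] by simp
  qed
qed

section \<open>Zero automata and quasi-zero automata\<close>

lemma foldl_min_delta: "foldl min_delta X w = {v. w @ v \<in> X}"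
  by (induction w arbitrary: X) (auto simp: min_delta_def)

lemma foldl_sink: "(\<And>a. d z a = z) \<Longrightarrow> foldl d z v = z"
  by (induction v) auto

lemma zero_automaton_min_iff_zero_word:
  "zero_automaton (min_states L) min_delta \<longleftrightarrow> (\<exists>w. zero_word L w)"
proof
  assume "zero_automaton (min_states L) min_delta"
  then obtain w q z where sync: "\<forall>p\<in>min_states L. foldl min_delta p w = q"
    and z: "z \<in> min_states L" "\<And>a. min_delta z a = z"
    unfolding zero_automaton_def synchronising_def sink_state_def by blast
  have "q = z"
    using sync z foldl_sink[of min_delta z w] by auto
  have z_trivial: "v \<in> z \<longleftrightarrow> [] \<in> z" for v
  proof -
    have "{u. v @ u \<in> z} = z"
      using foldl_sink[of min_delta z v] z(2) by (simp add: foldl_min_delta)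
    then have "[] \<in> {u. v @ u \<in> z} \<longleftrightarrow> [] \<in> z"
      by simp
    then show ?thesis
      by simp
  qed
  have "x @ w @ y \<in> L \<longleftrightarrow> [] \<in> z" for x y
  proof -
    have "foldl min_delta (lquot L x) w = z"
      using sync \<open>q = z\<close> unfolding min_states_def by blast
    then have "y \<in> z \<longleftrightarrow> x @ w @ y \<in> L"
      by (auto simp: foldl_min_delta lquot_def)
    then show ?thesis
      using z_trivial by blast
  qed
  then have "zero_word L w"
    unfolding zero_word_def by (metis append.left_neutral append.right_neutral)
  then show "\<exists>w. zero_word L w" ..
next
  assume "\<exists>w. zero_word L w"
  then obtain w where w: "zero_word L w" ..
  define Z where "Z = (if w \<in> L then UNIV else {} :: 'a list set)"
  have lquot_w: "lquot L (x @ w) = Z" for x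
    using w unfolding zero_word_def lquot_def Z_def by auto
  have "\<forall>p\<in>min_states L. foldl min_delta p w = Z"
    using lquot_w by (auto simp: min_states_def foldl_min_delta lquot_def)
  moreover have "Z \<in> min_states L"
    using lquot_w[of "[]"] unfolding min_states_def by (metis append_Nil rangeI)
  moreover have "min_delta Z a = Z" for a
    unfolding min_delta_def Z_def by auto
  ultimately have "\<forall>p\<in>min_states L. foldl min_delta p w = Z"
    and "sink_state (min_states L) min_delta Z"
    unfolding sink_state_def by blast+
  then show "zero_automaton (min_states L) min_delta"
    unfolding zero_automaton_def synchronising_def by blast
qed

lemma foldl_closed:
  assumes "q \<in> Q" and "\<forall>q\<in>Q. \<forall>a. d q a \<in> Q"
  shows "foldl d q w \<in> Q"
  using assms by (induction w arbitrary: q) auto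

lemma reach_trans: "reach d p q \<Longrightarrow> reach d q r \<Longrightarrow> reach d p r"
  unfolding reach_def by (metis foldl_append)

lemma reach_refl: "reach d p p"
  unfolding reach_def by (metis foldl_Nil)

lemma foldl_Sink_closed: "s \<in> \<Union>(Sink Q d) \<Longrightarrow> foldl d s v \<in> \<Union>(Sink Q d)"
  unfolding Sink_def sink_component_def reach_def by blast

text \<open>A state whose set of successors has minimal size among the successors of q spans a
  sink component.\<close>

lemma reaches_Sink:
  assumes "finite Q" and closed: "\<forall>q\<in>Q. \<forall>a. d q a \<in> Q" and "q \<in> Q"
  shows "\<exists>w. foldl d q w \<in> \<Union>(Sink Q d)"
proof -
  define R where "R p = {x. reach d p x}" for p
  have R_Q: "R p \<subseteq> Q" if "p \<in> Q" for p
    unfolding R_def reach_def using foldl_closed[OF that closed] by blast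
  obtain p where p: "p \<in> R q" and p_min: "\<And>p'. p' \<in> R q \<Longrightarrow> card (R p) \<le> card (R p')"
    using ex_has_least_nat[of "\<lambda>p. p \<in> R q" q "\<lambda>p. card (R p)"] reach_refl[of d q]
    unfolding R_def by blast
  have "p \<in> Q"
    using p R_Q[OF \<open>q \<in> Q\<close>] by blast
  have finite_R: "finite (R p)"
    using R_Q[OF \<open>p \<in> Q\<close>] \<open>finite Q\<close> by (rule finite_subset)
  have R_closed: "R p' \<subseteq> R p" if "p' \<in> R p" for p'
  proof
    fix x assume "x \<in> R p'"
    then show "x \<in> R p"
      using that reach_trans[of d p p' x] unfolding R_def by simp
  qed
  have R_same: "R p' = R p" if "p' \<in> R p" for p'
  proof (rule card_subset_eq[OF finite_R R_closed[OF that]])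
    have "p' \<in> R q"
      using p that reach_trans[of d q p p'] unfolding R_def by simp
    then show "card (R p') = card (R p)"
      using p_min card_mono[OF finite_R R_closed[OF that]] by (simp add: le_antisym)
  qed
  have "p \<in> R p"
    by (simp add: R_def reach_refl)
  have "sink_component Q d (R p)"
    unfolding sink_component_def
  proof (intro conjI ballI allI impI)
    show "R p \<noteq> {}"
      using \<open>p \<in> R p\<close> by blast
    show "R p \<subseteq> Q"
      using R_Q[OF \<open>p \<in> Q\<close>] .
    show "reach d p1 p2" if "p1 \<in> R p" "p2 \<in> R p" for p1 p2
    proof -
      have "p2 \<in> R p1"
        using that R_same[of p1] by simp
      then show ?thesis
        by (simp add: R_def)
    qed
    show "x \<in> R p" if "p1 \<in> R p" "reach d p1 x" for p1 x
      using that R_closed[of p1] by (auto simp: R_def)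
  qed
  with \<open>p \<in> R p\<close> have "p \<in> \<Union>(Sink Q d)"
    unfolding Sink_def by blast
  then show ?thesis
    using p unfolding R_def reach_def by blast
qed

lemma synchronises_into_Sink:
  assumes "finite Q" and closed: "\<forall>q\<in>Q. \<forall>a. d q a \<in> Q"
  shows "\<exists>w. \<forall>q\<in>Q. foldl d q w \<in> \<Union>(Sink Q d)"
proof -
  have "\<exists>w. \<forall>q\<in>P. foldl d q w \<in> \<Union>(Sink Q d)" if "finite P" "P \<subseteq> Q" for P
    using that
  proof (induction P rule: finite_induct)
    case empty
    then show ?case by simp
  next
    case (insert q P)
    then obtain w where w: "\<forall>p\<in>P. foldl d p w \<in> \<Union>(Sink Q d)"
      by auto
    obtain w' where "foldl d (foldl d q w) w' \<in> \<Union>(Sink Q d)"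
      using reaches_Sink[OF assms foldl_closed[OF _ closed]] insert.prems by blast
    moreover have "foldl d (foldl d p w) w' \<in> \<Union>(Sink Q d)" if "p \<in> P" for p
      using w that by (blast intro: foldl_Sink_closed)
    ultimately have "\<forall>p\<in>insert q P. foldl d p (w @ w') \<in> \<Union>(Sink Q d)"
      by simp
    then show ?case ..
  qed
  then show ?thesis
    using \<open>finite Q\<close> by blast
qed

lemma zero_word_if_quasi_zero:
  assumes "dfa Q d q0 F" and "quasi_zero Q d F"
  shows "\<exists>w. zero_word (lang d q0 F) w"
proof -
  have closed: "\<forall>q\<in>Q. \<forall>a. d q a \<in> Q" and "finite Q" and "q0 \<in> Q"
    using assms(1) unfolding dfa_def by auto
  obtain w where w: "\<forall>q\<in>Q. foldl d q w \<in> \<Union>(Sink Q d)"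
    using synchronises_into_Sink[OF \<open>finite Q\<close> closed] by blast
  have same_acceptance: "p \<in> F \<longleftrightarrow> q \<in> F"
    if "p \<in> \<Union>(Sink Q d)" and "q \<in> \<Union>(Sink Q d)" for p q
    using assms(2) that unfolding quasi_zero_def by blast
  have into_Sink: "foldl d q0 (x @ w @ y) \<in> \<Union>(Sink Q d)" for x y
  proof -
    have "foldl d (foldl d q0 x) w \<in> \<Union>(Sink Q d)"
      using w foldl_closed[OF \<open>q0 \<in> Q\<close> closed] by blast
    then show ?thesis
      using foldl_Sink_closed[of _ Q d y] by simp
  qed
  have "x @ w @ y \<in> lang d q0 F \<longleftrightarrow> w \<in> lang d q0 F" for x y
    using same_acceptance[OF into_Sink[of x y] into_Sink[of "[]" "[]"]] by (simp add: lang_def)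
  then show ?thesis
    unfolding zero_word_def by blast
qed

section \<open>Sink components of a zero-one language\<close>

lemma lquot_lang: "lquot (lang d q0 G) u = lang d (foldl d q0 u) G"
  by (simp add: lquot_def lang_def)

lemma mu_n_lquot_le:
  fixes L :: "'a::finite list set"
  shows "mu_n (lquot L u) n \<le> real CARD('a) ^ length u * mu_n L (n + length u)"
proof -
  have "(@) u ` {v \<in> lquot L u. length v = n} \<subseteq> {v \<in> L. length v = n + length u}"
    by (auto simp: lquot_def)
  then have "card ((@) u ` {v \<in> lquot L u. length v = n}) \<le> card {v \<in> L. length v = n + length u}"
    by (rule card_mono[OF finite_words_length_in])
  moreover have "inj_on ((@) u) {v \<in> lquot L u. length v = n}"
    by (simp add: inj_on_def)
  ultimately have "card {v \<in> lquot L u. length v = n} \<le> card {v \<in> L. length v = n + length u}"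
    by (simp add: card_image)
  then have "mu_n (lquot L u) n
      \<le> real (card {v \<in> L. length v = n + length u}) / real CARD('a) ^ n"
    unfolding mu_n_def by (intro divide_right_mono) auto
  also have "\<dots> = real CARD('a) ^ length u * mu_n L (n + length u)"
    by (simp add: mu_n_def power_add)
  finally show ?thesis .
qed

lemma mu_n_lquot_tendsto_0:
  assumes "mu_n L \<longlonglongrightarrow> 0"
  shows "mu_n (lquot L u) \<longlonglongrightarrow> 0"
proof (rule tendsto_sandwich[OF always_eventually always_eventually tendsto_const])
  have "(\<lambda>n. mu_n L (n + length u)) \<longlonglongrightarrow> 0"
    using LIMSEQ_ignore_initial_segment[OF assms] .
  then show "(\<lambda>n. real CARD('a) ^ length u * mu_n L (n + length u)) \<longlonglongrightarrow> 0"
    by (simp add: tendsto_mult_right_zero)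
qed (use mu_n_nonneg mu_n_lquot_le in auto)

text \<open>Completing the words of length n injects them into the words of M of lengths
  n, ..., n + K, so these lengths carry weighted density at least one.\<close>

lemma mu_n_not_tendsto_0_if_bounded_completion:
  fixes M :: "'a::finite list set"
  assumes "\<And>v. \<exists>t. length t \<le> K \<and> v @ t \<in> M"
  shows "\<not> mu_n M \<longlonglongrightarrow> 0"
proof
  assume lim: "mu_n M \<longlonglongrightarrow> 0"
  obtain t where t: "\<And>v. length (t v) \<le> K \<and> v @ t v \<in> M"
    using assms by metis
  have ge_1: "1 \<le> (\<Sum>k\<le>K. real CARD('a) ^ k * mu_n M (n + k))" for n
  proof -
    have inj: "inj_on (\<lambda>v. v @ t v) {v. length v = n}"
      by (rule inj_onI) (simp add: append_eq_append_conv)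
    have "(\<lambda>v. v @ t v) ` {v. length v = n} \<subseteq> (\<Union>k\<le>K. {x \<in> M. length x = n + k})"
      using t by force
    then have "card ((\<lambda>v. v @ t v) ` {v :: 'a list. length v = n})
        \<le> card (\<Union>k\<le>K. {x \<in> M. length x = n + k})"
      by (intro card_mono) (auto intro: finite_words_length_in)
    also have "\<dots> \<le> (\<Sum>k\<le>K. card {x \<in> M. length x = n + k})"
      by (rule card_UN_le) simp
    finally have "CARD('a) ^ n \<le> (\<Sum>k\<le>K. card {x \<in> M. length x = n + k})"
      by (simp add: card_image[OF inj] card_words_length)
    then have "real CARD('a) ^ n \<le> (\<Sum>k\<le>K. real (card {x \<in> M. length x = n + k}))"
      using of_nat_mono[where 'a = real] by fastforce
    also have "\<dots> = (\<Sum>k\<le>K. real CARD('a) ^ n * (real CARD('a) ^ k * mu_n M (n + k)))"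
      by (rule sum.cong) (simp_all add: mu_n_def power_add)
    also have "\<dots> = real CARD('a) ^ n * (\<Sum>k\<le>K. real CARD('a) ^ k * mu_n M (n + k))"
      by (simp add: sum_distrib_left)
    finally show ?thesis
      by (simp add: mult_le_cancel_left1)
  qed
  have "(\<lambda>n. \<Sum>k\<le>K. real CARD('a) ^ k * mu_n M (n + k))
      \<longlonglongrightarrow> (\<Sum>k\<le>K. real CARD('a) ^ k * 0)"
    by (intro tendsto_sum tendsto_mult tendsto_const LIMSEQ_ignore_initial_segment[OF lim])
  then have "1 \<le> (\<Sum>k\<le>K. real CARD('a) ^ k * (0::real))"
    by (rule LIMSEQ_le_const) (use ge_1 in blast)
  then show False
    by simp
qed

lemma sink_component_bounded_return:
  assumes "sink_component Q d P" and "finite P" and "r \<in> P"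
  shows "\<exists>K. \<forall>v. \<exists>t. length t \<le> K \<and> foldl d r (v @ t) = r"
proof -
  have "\<forall>s\<in>P. \<exists>t. foldl d s t = r"
    using assms(1,3) unfolding sink_component_def reach_def by blast
  then obtain t where t: "\<And>s. s \<in> P \<Longrightarrow> foldl d s (t s) = r"
    by metis
  have stays: "foldl d r v \<in> P" for v
    using assms(1,3) unfolding sink_component_def reach_def by blast
  define K where "K = Max ((\<lambda>s. length (t s)) ` P)"
  have "length (t (foldl d r v)) \<le> K \<and> foldl d r (v @ t (foldl d r v)) = r" for v
    using stays[of v] t[OF stays[of v]] \<open>finite P\<close> unfolding K_def by simp
  then show ?thesis
    by blast
qed

lemma Sink_disjoint_if_mu_n_tendsto_0:
  assumes "dfa Q d q0 F" and "mu_n (lang d q0 G) \<longlonglongrightarrow> 0"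
  shows "\<Union>(Sink Q d) \<inter> G = {}"
proof (rule ccontr)
  assume "\<Union>(Sink Q d) \<inter> G \<noteq> {}"
  then obtain P r where P: "sink_component Q d P" and "r \<in> P" "r \<in> G"
    unfolding Sink_def by blast
  have "finite P" and "\<exists>u. foldl d q0 u = r"
    using assms(1) P \<open>r \<in> P\<close> finite_subset unfolding dfa_def sink_component_def by blast+
  then obtain K u where K: "\<forall>v. \<exists>t. length t \<le> K \<and> foldl d r (v @ t) = r"
    and u: "foldl d q0 u = r"
    using sink_component_bounded_return[OF P _ \<open>r \<in> P\<close>] by blast
  have "\<exists>t. length t \<le> K \<and> v @ t \<in> lang d r G" for v
  proof -
    obtain t where "length t \<le> K" "foldl d r (v @ t) = r"
      using K by blast
    then show ?thesis
      using \<open>r \<in> G\<close> unfolding lang_def by auto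
  qed
  then have "\<not> mu_n (lang d r G) \<longlonglongrightarrow> 0"
    by (rule mu_n_not_tendsto_0_if_bounded_completion)
  moreover have "mu_n (lang d r G) \<longlonglongrightarrow> 0"
    using mu_n_lquot_tendsto_0[OF assms(2), of u] by (simp add: lquot_lang u)
  ultimately show False ..
qed

lemma quasi_zero_if_zero_one:
  assumes "dfa Q d q0 F" and "zero_one (lang d q0 F)"
  shows "quasi_zero Q d F"
proof -
  obtain l where lim: "mu_n (lang d q0 F) \<longlonglongrightarrow> l" and "l = 0 \<or> l = 1"
    using assms(2) unfolding zero_one_def by blast
  then consider "mu_n (lang d q0 F) \<longlonglongrightarrow> 0" | "mu_n (lang d q0 F) \<longlonglongrightarrow> 1"
    by blast
  then show ?thesis
  proof cases
    case 1
    then show ?thesis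
      using Sink_disjoint_if_mu_n_tendsto_0[OF assms(1)] unfolding quasi_zero_def by blast
  next
    case 2
    have "lang d q0 (- F) = - lang d q0 F"
      by (auto simp: lang_def)
    then have "mu_n (lang d q0 (- F)) = (\<lambda>n. 1 - mu_n (lang d q0 F) n)"
      by (simp add: mu_n_Compl fun_eq_iff)
    moreover have "(\<lambda>n. 1 - mu_n (lang d q0 F) n) \<longlonglongrightarrow> 1 - 1"
      using 2 by (intro tendsto_intros)
    ultimately have "mu_n (lang d q0 (- F)) \<longlonglongrightarrow> 0"
      by simp
    then show ?thesis
      using Sink_disjoint_if_mu_n_tendsto_0[OF assms(1)] unfolding quasi_zero_def by blast
  qed
qed

lemma zero_one_iff_zero_word:
  fixes L :: "'a::finite list set"
  assumes "regular L"
  shows "zero_one L \<longleftrightarrow> (\<exists>w. zero_word L w)"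
proof
  assume "zero_one L"
  obtain Q :: "nat set" and d q0 F where dfa: "dfa Q d q0 F" and L: "lang d q0 F = L"
    using assms unfolding regular_def by blast
  have "quasi_zero Q d F"
    using quasi_zero_if_zero_one[OF dfa] \<open>zero_one L\<close> unfolding L .
  with dfa show "\<exists>w. zero_word L w"
    unfolding L[symmetric] by (rule zero_word_if_quasi_zero)
next
  assume "\<exists>w. zero_word L w"
  then show "zero_one L"
    unfolding zero_one_def using assms mu_n_zero_word by fastforce
qed

lemma quasi_zero_dfa_iff_zero_word:
  fixes L :: "'a::finite list set"
  assumes "regular L"
  shows "(\<exists>(Q::nat set) d q0 F. dfa Q d q0 F \<and> lang d q0 F = L \<and> quasi_zero Q d F)
    \<longleftrightarrow> (\<exists>w. zero_word L w)"
proof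
  assume "\<exists>(Q::nat set) d q0 F. dfa Q d q0 F \<and> lang d q0 F = L \<and> quasi_zero Q d F"
  then obtain Q :: "nat set" and d q0 F where dfa: "dfa Q d q0 F" and qz: "quasi_zero Q d F"
    and L: "lang d q0 F = L"
    by blast
  show "\<exists>w. zero_word L w"
    using zero_word_if_quasi_zero[OF dfa qz] unfolding L .
next
  assume "\<exists>w. zero_word L w"
  then have "zero_one L"
    using zero_one_iff_zero_word[OF assms] by blast
  obtain Q :: "nat set" and d q0 F where dfa: "dfa Q d q0 F" and L: "lang d q0 F = L"
    using assms unfolding regular_def by blast
  have "quasi_zero Q d F"
    using quasi_zero_if_zero_one[OF dfa] \<open>zero_one L\<close> unfolding L .
  then show "\<exists>(Q::nat set) d q0 F. dfa Q d q0 F \<and> lang d q0 F = L \<and> quasi_zero Q d F"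
    using dfa L by blast
qed

theorem theorem1:
  fixes L :: "('a::finite) list set"
  assumes "regular L"
  shows "(zero_automaton (min_states L) min_delta \<longleftrightarrow> language_with_zero L)
       \<and> (language_with_zero L \<longleftrightarrow> zero_one L)
       \<and> (zero_one L \<longleftrightarrow>
            (\<exists>(Q::nat set) delta q0 F. dfa Q delta q0 F \<and> lang delta q0 F = L
               \<and> quasi_zero Q delta F))"
  using zero_automaton_min_iff_zero_word[of L] language_with_zero_iff_zero_word[of L]
    zero_one_iff_zero_word[OF assms] quasi_zero_dfa_iff_zero_word[OF assms]
  by blast

end
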